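(* Let $n\ge 4$ and let $x$ be any vertex of the path $P_n$. Then there exists a $(P_n,x)$-well path 2-placement.
   Context: $P_n$ is the path on $n$ vertices; $dist$ is distance in $P_n$, $d(y)$ the degree of $y$ in $P_n$, $N(x)$ the set of neighbors of $x$. A permutation $\sigma$ of $V(P_n)$ is a 2-placement of $P_n$ if for every edge $ab$ of $P_n$, $\sigma(a)\sigma(b)$ is not an edge of $P_n$. $P_n^k$ is the $k$-th power of $P_n$; $\sigma(P_n)\subseteq P_n^k$ means $dist(\sigma(a),\sigma(b))\le k$ for every edge $ab$ of $P_n$. A fixed-point-free permutation $\sigma$ of $V(P_n)$ is a $(P_n,x)$-well path 2-placement if: (1) $\sigma$ is a 2-placement of $P_n$; (2) $\sigma(P_n)\subseteq P_n^6$; (3) $dist(x,\sigma(x))\le 2$; (4) $dist(y,\sigma(y))\le 3$ for every $y\in N(x)$ and for every $y$ with $d(y)=1$; (5) every cycle of $\sigma$ (in its disjoint cycle decomposition) has length at most $5$. *)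

theory Defs
  imports "HOL-Combinatorics.Permutations"
begin

definition path_edge :: "nat \<Rightarrow> nat \<Rightarrow> nat \<Rightarrow> bool" where
  "path_edge n a b \<longleftrightarrow> a < n \<and> b < n \<and> (a + 1 = b \<or> b + 1 = a)"

definition path_dist :: "nat \<Rightarrow> nat \<Rightarrow> nat" where
  "path_dist a b = (if a \<le> b then b - a else a - b)"

definition path_nbrs :: "nat \<Rightarrow> nat \<Rightarrow> nat set" where
  "path_nbrs n x = {y. path_edge n x y}"

definition path_deg :: "nat \<Rightarrow> nat \<Rightarrow> nat" where
  "path_deg n y = card (path_nbrs n y)"

definition two_placement :: "nat \<Rightarrow> (nat \<Rightarrow> nat) \<Rightarrow> bool" where
  "two_placement n \<sigma> \<longleftrightarrow> \<sigma> permutes {0..<n} \<and>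
     (\<forall>a b. path_edge n a b \<longrightarrow> \<not> path_edge n (\<sigma> a) (\<sigma> b))"

definition in_path_power :: "nat \<Rightarrow> nat \<Rightarrow> (nat \<Rightarrow> nat) \<Rightarrow> bool" where
  "in_path_power n k \<sigma> \<longleftrightarrow> (\<forall>a b. path_edge n a b \<longrightarrow> path_dist (\<sigma> a) (\<sigma> b) \<le> k)"

text \<open>Every cycle of sigma has length at most m (the cycle through v has length
  equal to the least k \<ge> 1 with sigma^k v = v).\<close>
definition cycles_le :: "nat \<Rightarrow> nat \<Rightarrow> (nat \<Rightarrow> nat) \<Rightarrow> bool" where
  "cycles_le n m \<sigma> \<longleftrightarrow> (\<forall>v < n. \<exists>k. 1 \<le> k \<and> k \<le> m \<and> (\<sigma> ^^ k) v = v)"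

definition well_path_2placement :: "nat \<Rightarrow> nat \<Rightarrow> (nat \<Rightarrow> nat) \<Rightarrow> bool" where
  "well_path_2placement n x \<sigma> \<longleftrightarrow>
     \<sigma> permutes {0..<n} \<and> (\<forall>v < n. \<sigma> v \<noteq> v) \<and>
     two_placement n \<sigma> \<and>
     in_path_power n 6 \<sigma> \<and>
     path_dist x (\<sigma> x) \<le> 2 \<and>
     (\<forall>y \<in> path_nbrs n x. path_dist y (\<sigma> y) \<le> 3) \<and>
     (\<forall>y < n. path_deg n y = 1 \<longrightarrow> path_dist y (\<sigma> y) \<le> 3) \<and>
     cycles_le n 5 \<sigma>"

end

theory Submission
  imports Defs
begin

text \<open>Call a fixed-point-free placement short if it moves every vertex by at most 2 and sends
  consecutive vertices to vertices at distance at least 2. A short placement is a well path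
  2-placement for every anchor x, since moving by at most 2 also keeps images of edges within
  distance 5. Short
  placements of two paths can be juxtaposed: the last vertex of the first block, not being fixed,
  is sent at least 2 below the first vertex of the second block. The blocks 2 0 3 1 and
  2 0 4 1 3 are short, so every n = 4a + 5b is covered, i.e. every n \<ge> 4 except 6, 7 and 11.
  For n = 6 and 7 no short placement exists at all (hence none for 11 = 4 + 7 = 5 + 6), and there
  two explicit placements, chosen according to x, do the job.\<close>

lemma path_dist_commute: "path_dist a b = path_dist b a"
  by (simp add: path_dist_def)

lemma path_dist_shift [simp]: "path_dist (m + a) (m + b) = path_dist a b"
  by (simp add: path_dist_def)

lemma path_edge_imp_dist_1: "path_edge n a b \<Longrightarrow> path_dist a b = 1"
  by (auto simp: path_edge_def path_dist_def)

lemma path_deg_eq_1_imp_end: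
  assumes "y < n" and "path_deg n y = 1"
  shows "y = 0 \<or> y = n - 1"
proof (rule ccontr)
  assume "\<not> (y = 0 \<or> y = n - 1)"
  then have "path_nbrs n y = {y - 1, y + 1}"
    using assms(1) by (auto simp: path_nbrs_def path_edge_def)
  then have "path_deg n y = 2"
    by (simp add: path_deg_def)
  with assms(2) show False by simp
qed

text \<open>In this form the cycle condition is decided by simp on concrete placements.\<close>

lemma cycles_le_iff: "cycles_le n m \<sigma> \<longleftrightarrow> (\<forall>v<n. \<exists>k<m. (\<sigma> ^^ Suc k) v = v)"
  unfolding cycles_le_def
proof (intro iffI allI impI)
  fix v assume "\<forall>v<n. \<exists>k. 1 \<le> k \<and> k \<le> m \<and> (\<sigma> ^^ k) v = v" "v < n"
  then obtain k where "1 \<le> k" "k \<le> m" "(\<sigma> ^^ k) v = v" by blast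
  then show "\<exists>k<m. (\<sigma> ^^ Suc k) v = v"
    by (intro exI[of _ "k - 1"]) simp
next
  fix v assume "\<forall>v<n. \<exists>k<m. (\<sigma> ^^ Suc k) v = v" "v < n"
  then show "\<exists>k. 1 \<le> k \<and> k \<le> m \<and> (\<sigma> ^^ k) v = v"
    by (metis Suc_leI le_add1 plus_1_eq_Suc)
qed

lemma periodic_self_map_permutes:
  assumes "finite A" and into: "\<sigma> ` A \<subseteq> A"
    and periodic: "\<forall>a\<in>A. \<exists>k. (\<sigma> ^^ Suc k) a = a" and "\<forall>a. a \<notin> A \<longrightarrow> \<sigma> a = a"
  shows "\<sigma> permutes A"
proof (rule bij_imp_permutes)
  have iterate_in: "(\<sigma> ^^ k) a \<in> A" if "a \<in> A" for a k
    using that into by (induction k) auto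
  have "A \<subseteq> \<sigma> ` A"
  proof
    fix a assume "a \<in> A"
    then obtain k where "\<sigma> ((\<sigma> ^^ k) a) = a"
      using periodic by auto
    then show "a \<in> \<sigma> ` A"
      using iterate_in[OF \<open>a \<in> A\<close>] by (metis image_eqI)
  qed
  with into have onto: "\<sigma> ` A = A" by blast
  then have "inj_on \<sigma> A"
    using \<open>finite A\<close> by (simp add: eq_card_imp_inj_on)
  with onto show "bij_betw \<sigma> A A"
    by (simp add: bij_betw_def)
qed (use assms in auto)

lemma well_path_2placementI:
  assumes maps: "\<forall>v<n. \<sigma> v < n \<and> \<sigma> v \<noteq> v" and outside: "\<forall>v\<ge>n. \<sigma> v = v"
    and cycles: "cycles_le n 5 \<sigma>"
    and consecutive: "\<forall>i. i + 1 < n \<longrightarrow>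
      2 \<le> path_dist (\<sigma> i) (\<sigma> (i + 1)) \<and> path_dist (\<sigma> i) (\<sigma> (i + 1)) \<le> 6"
    and ends: "path_dist 0 (\<sigma> 0) \<le> 3" "path_dist (n - 1) (\<sigma> (n - 1)) \<le> 3"
    and anchor: "path_dist x (\<sigma> x) \<le> 2"
      "x + 1 < n \<longrightarrow> path_dist (x + 1) (\<sigma> (x + 1)) \<le> 3"
      "0 < x \<longrightarrow> path_dist (x - 1) (\<sigma> (x - 1)) \<le> 3"
  shows "well_path_2placement n x \<sigma>"
proof -
  have perm: "\<sigma> permutes {0..<n}"
    by (rule periodic_self_map_permutes) (use maps outside cycles in \<open>auto simp: cycles_le_iff\<close>)
  have edge_image: "2 \<le> path_dist (\<sigma> a) (\<sigma> b) \<and> path_dist (\<sigma> a) (\<sigma> b) \<le> 6"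
    if "path_edge n a b" for a b
    using that consecutive path_dist_commute[of "\<sigma> a"] unfolding path_edge_def by auto
  have "path_dist y (\<sigma> y) \<le> 3" if "y \<in> path_nbrs n x" for y
    using that anchor unfolding path_nbrs_def path_edge_def by auto
  moreover have "path_dist y (\<sigma> y) \<le> 3" if "y < n" "path_deg n y = 1" for y
    using path_deg_eq_1_imp_end[OF that] ends by auto
  ultimately show ?thesis
    unfolding well_path_2placement_def two_placement_def in_path_power_def
    using perm maps anchor(1) cycles edge_image path_edge_imp_dist_1 by fastforce
qed

definition list_perm :: "nat list \<Rightarrow> nat \<Rightarrow> nat" where
  "list_perm xs v = (if v < length xs then xs ! v else v)"

definition short_placement :: "nat \<Rightarrow> (nat \<Rightarrow> nat) \<Rightarrow> bool" where
  "short_placement n \<sigma> \<longleftrightarrow>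
     (\<forall>v<n. \<sigma> v < n \<and> \<sigma> v \<noteq> v \<and> path_dist v (\<sigma> v) \<le> 2) \<and> (\<forall>v\<ge>n. \<sigma> v = v) \<and>
     cycles_le n 5 \<sigma> \<and> (\<forall>i. i + 1 < n \<longrightarrow> 2 \<le> path_dist (\<sigma> i) (\<sigma> (i + 1)))"

lemma short_placement_imp_well_path_2placement:
  assumes "short_placement n \<sigma>"
  shows "well_path_2placement n x \<sigma>"
proof -
  have displacement: "path_dist v (\<sigma> v) \<le> 2" for v
    using assms unfolding short_placement_def by (cases "v < n") (auto simp: path_dist_def)
  have "path_dist (\<sigma> i) (\<sigma> (i + 1)) \<le> 6" for i
    using displacement[of i] displacement[of "i + 1"]
    unfolding path_dist_def by (auto split: if_splits)
  moreover have "path_dist v (\<sigma> v) \<le> 3" for v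
    using displacement[of v] by simp
  ultimately show ?thesis
    using assms displacement unfolding short_placement_def by (intro well_path_2placementI) auto
qed

definition juxtapose :: "nat \<Rightarrow> (nat \<Rightarrow> nat) \<Rightarrow> (nat \<Rightarrow> nat) \<Rightarrow> nat \<Rightarrow> nat" where
  "juxtapose m \<sigma> \<tau> v = (if v < m then \<sigma> v else m + \<tau> (v - m))"

lemma funpow_juxtapose:
  assumes "\<forall>v<m. \<sigma> v < m"
  shows "(juxtapose m \<sigma> \<tau> ^^ k) v = (if v < m then (\<sigma> ^^ k) v else m + (\<tau> ^^ k) (v - m))"
proof -
  have iterate_below: "(\<sigma> ^^ k) v < m" if "v < m" for k
    using that assms by (induction k) auto
  show ?thesis
    using iterate_below
    by (induction k) (auto simp: juxtapose_def)
qed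

lemma short_placement_juxtapose:
  assumes \<sigma>: "short_placement m \<sigma>" and \<tau>: "short_placement k \<tau>"
  shows "short_placement (m + k) (juxtapose m \<sigma> \<tau>)"
proof -
  let ?\<rho> = "juxtapose m \<sigma> \<tau>"
  have \<sigma>_below: "\<forall>v<m. \<sigma> v < m" and \<sigma>_not_fixed: "\<forall>v<m. \<sigma> v \<noteq> v"
    using \<sigma> by (simp_all add: short_placement_def)
  have \<rho>_shift: "?\<rho> (m + w) = m + \<tau> w" for w
    by (simp add: juxtapose_def)
  have vertex: "?\<rho> v < m + k \<and> ?\<rho> v \<noteq> v \<and> path_dist v (?\<rho> v) \<le> 2" if "v < m + k" for v
  proof (cases "v < m")
    case True
    with \<sigma> show ?thesis by (force simp: short_placement_def juxtapose_def)
  next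
    case False
    define w where "w = v - m"
    then have v: "v = m + w" and "w < k" using False that by simp_all
    with \<tau> show ?thesis unfolding v \<rho>_shift short_placement_def by simp
  qed
  have outside: "?\<rho> v = v" if "m + k \<le> v" for v
    using that \<tau> by (simp add: short_placement_def juxtapose_def)
  have cycles: "cycles_le (m + k) 5 ?\<rho>"
    unfolding cycles_le_iff
  proof (intro allI impI)
    fix v assume "v < m + k"
    show "\<exists>j<5. (?\<rho> ^^ Suc j) v = v"
    proof (cases "v < m")
      case True
      then obtain j where "j < 5" "(\<sigma> ^^ Suc j) v = v"
        using \<sigma> by (auto simp: short_placement_def cycles_le_iff)
      with True show ?thesis by (auto simp: funpow_juxtapose[OF \<sigma>_below] simp del: funpow.simps)
    next
      case False
      with \<open>v < m + k\<close> have "v - m < k" by simp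
      then obtain j where "j < 5" "(\<tau> ^^ Suc j) (v - m) = v - m"
        using \<tau> by (auto simp: short_placement_def cycles_le_iff simp del: funpow.simps)
      with False show ?thesis by (auto simp: funpow_juxtapose[OF \<sigma>_below] simp del: funpow.simps)
    qed
  qed
  have consecutive: "2 \<le> path_dist (?\<rho> i) (?\<rho> (i + 1))" if "i + 1 < m + k" for i
  proof -
    consider "i + 1 < m" | "i + 1 = m" | "m \<le> i" by linarith
    then show ?thesis
    proof cases
      case 1
      with \<sigma> show ?thesis by (simp add: short_placement_def juxtapose_def)
    next
      case 2
      then have "\<sigma> i + 2 \<le> m" using \<sigma>_below \<sigma>_not_fixed by fastforce
      with 2 show ?thesis by (simp add: juxtapose_def path_dist_def)
    next
      case 3
      then obtain w where i: "i = m + w" by (metis le_add_diff_inverse)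
      have "?\<rho> (i + 1) = m + \<tau> (w + 1)"
        using \<rho>_shift[of "w + 1"] by (simp add: i)
      with \<tau> that show ?thesis by (simp add: short_placement_def \<rho>_shift i)
    qed
  qed
  show ?thesis
    using vertex outside cycles consecutive unfolding short_placement_def by auto
qed

lemma short_placement_block_4: "short_placement 4 (list_perm [2, 0, 3, 1])"
  and short_placement_block_5: "short_placement 5 (list_perm [2, 0, 4, 1, 3])"
  by (simp_all add: short_placement_def list_perm_def cycles_le_iff path_dist_def
      numeral_eq_Suc All_less_Suc Ex_less_Suc)

lemma exists_short_placement: "\<exists>\<sigma>. short_placement (4 * a + 5 * b) \<sigma>"
proof (induction b)
  case 0
  show ?case
  proof (induction a)
    case 0
    show ?case by (auto simp: short_placement_def cycles_le_def)
  next
    case (Suc a)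
    then obtain \<sigma> where "short_placement (4 * a) \<sigma>" by auto
    from short_placement_juxtapose[OF this short_placement_block_4] show ?case
      by (auto simp: add.commute)
  qed
next
  case (Suc b)
  then obtain \<sigma> where "short_placement (4 * a + 5 * b) \<sigma>" by auto
  from short_placement_juxtapose[OF this short_placement_block_5] show ?case
    by (auto simp: ac_simps)
qed

lemma exists_well_path_2placement_6:
  assumes "x < 6"
  shows "\<exists>\<sigma>. well_path_2placement 6 x \<sigma>"
proof -
  have "x \<in> {0, 1, 4, 5} \<Longrightarrow> well_path_2placement 6 x (list_perm [1, 3, 5, 0, 2, 4])"
    and "x \<in> {2, 3} \<Longrightarrow> well_path_2placement 6 x (list_perm [2, 4, 0, 5, 1, 3])"
    by (rule well_path_2placementI;
        auto simp: list_perm_def cycles_le_iff path_dist_def numeral_eq_Suc All_less_Suc Ex_less_Suc)+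
  moreover have "x \<in> {0, 1, 4, 5} \<or> x \<in> {2, 3}"
    using assms by auto
  ultimately show ?thesis by blast
qed

lemma exists_well_path_2placement_7:
  assumes "x < 7"
  shows "\<exists>\<sigma>. well_path_2placement 7 x \<sigma>"
proof -
  have "x \<in> {0, 1, 4, 5, 6} \<Longrightarrow> well_path_2placement 7 x (list_perm [1, 3, 5, 0, 2, 6, 4])"
    and "x \<in> {2, 3} \<Longrightarrow> well_path_2placement 7 x (list_perm [1, 4, 0, 5, 2, 6, 3])"
    by (rule well_path_2placementI;
        auto simp: list_perm_def cycles_le_iff path_dist_def numeral_eq_Suc All_less_Suc Ex_less_Suc)+
  moreover have "x \<in> {0, 1, 4, 5, 6} \<or> x \<in> {2, 3}"
    using assms by auto
  ultimately show ?thesis by blast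
qed

lemma exists_well_path_2placement_11:
  assumes "x < 11"
  shows "\<exists>\<sigma>. well_path_2placement 11 x \<sigma>"
proof -
  have "x \<in> {0, 1, 2, 3, 4, 5, 8, 9, 10} \<Longrightarrow>
      well_path_2placement 11 x (list_perm [1, 3, 0, 2, 5, 7, 9, 4, 6, 10, 8])"
    and "x \<in> {6, 7} \<Longrightarrow> well_path_2placement 11 x (list_perm [1, 3, 0, 2, 5, 8, 4, 9, 6, 10, 7])"
    by (rule well_path_2placementI;
        auto simp: list_perm_def cycles_le_iff path_dist_def numeral_eq_Suc All_less_Suc Ex_less_Suc)+
  moreover have "x \<in> {0, 1, 2, 3, 4, 5, 8, 9, 10} \<or> x \<in> {6, 7}"
    using assms by simp presburger
  ultimately show ?thesis by blast
qed

theorem theorem3p1: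
  fixes n x :: nat
  assumes "n \<ge> 4" and "x < n"
  shows "\<exists>\<sigma>. well_path_2placement n x \<sigma>"
proof (cases "n \<in> {6, 7, 11}")
  case True
  with assms(2) show ?thesis
    using exists_well_path_2placement_6 exists_well_path_2placement_7
      exists_well_path_2placement_11 by auto
next
  case False
  with assms(1) have "\<exists>a b. n = 4 * a + 5 * b" by simp presburger
  with exists_short_placement obtain \<sigma> where "short_placement n \<sigma>" by blast
  then show ?thesis by (blast intro: short_placement_imp_well_path_2placement)
qed

end
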